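(* Let $a>0$, $u\neq 0$, $\lambda>0$ and $S$ a positive integer, and for $\gamma\in\mathbb{R}$ write $k:=a+\gamma$. On the set $I:=\{\gamma\in\mathbb{R}: 2k-\lambda[k^2+\tfrac2Sa^2]>0\}$ consider the (one-dimensional) expected test loss $$L_{\rm test}(\gamma)=\frac{a\gamma^2}{2k}\cdot\frac{2-\lambda k}{2k-\lambda\left[k^2+\frac2Sa^2\right]}\,u^2.$$ Then there exist $a$, $\lambda$ and $S$ such that $I$ is nonempty and the minimizer $\gamma^*=\arg\min_{\gamma\in I}L_{\rm test}(\gamma)$ satisfies $\gamma^*<0$.
   Context: This is the one-dimensional $L_2$-regularized linear regression trained by plain SGD with learning rate $\lambda$ and batch size $S$: inputs $x\sim\mathcal N(0,a)$, labels $y=ux$, loss $\frac12 a(w-u)^2+\frac12\gamma w^2$ with weight decay $\gamma$; $L_{\rm test}=\frac12 a\,\mathbb{E}_w[(w-u)^2]$ over the stationary distribution, which is finite exactly on $I$, where it is given by the displayed formula. *)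

theory Defs
  imports Complex_Main
begin

definition stab_set :: "real \<Rightarrow> real \<Rightarrow> nat \<Rightarrow> real set" where
  "stab_set a lam S = {g. 2 * (a + g) - lam * ((a + g)^2 + 2 / real S * a^2) > 0}"

definition L_test :: "real \<Rightarrow> real \<Rightarrow> real \<Rightarrow> nat \<Rightarrow> real \<Rightarrow> real" where
  "L_test a u lam S g =
     (a * g^2 / (2 * (a + g))) *
     ((2 - lam * (a + g)) / (2 * (a + g) - lam * ((a + g)^2 + 2 / real S * a^2))) * u^2"

end

theory Submission
  imports Defs "HOL-Real_Asymp.Real_Asymp"
begin

text \<open>
  For \<open>a = 1\<close>, \<open>\<lambda> = 2\<close>, \<open>S = 9\<close> the learning rate is so large that SGD is stable only
  for weight decay in \<open>I = (-2/3, -1/3)\<close>, so every minimizer is negative. On \<open>I\<close> the test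
  loss is a rational function of \<open>\<gamma>\<close> that blows up at both ends of the interval, hence
  it attains its infimum by continuity on a compact subinterval.
\<close>

lemma continuous_attains_inf_on_superset:
  fixes f :: "'a::topological_space \<Rightarrow> 'b::linorder_topology"
  assumes "compact K" "K \<subseteq> I" "continuous_on K f" "c \<in> K"
    and "\<forall>x\<in>I - K. f c \<le> f x"
  shows "\<exists>g\<in>K. \<forall>x\<in>I. f g \<le> f x"
proof -
  obtain g where "g \<in> K" and g_min: "\<forall>y\<in>K. f g \<le> f y"
    using continuous_attains_inf[OF assms(1) _ assms(3)] \<open>c \<in> K\<close> by blast
  have "f g \<le> f x" if "x \<in> I" for x
    using g_min assms(4,5) that by (cases "x \<in> K") (auto intro: order.trans)
  with \<open>g \<in> K\<close> show ?thesis by blast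
qed

lemma continuous_attains_inf_open_interval_coercive:
  fixes f :: "real \<Rightarrow> real"
  assumes "a < b" "continuous_on {a<..<b} f"
    and "filterlim f at_top (at_right a)" "filterlim f at_top (at_left b)"
  shows "\<exists>g\<in>{a<..<b}. \<forall>x\<in>{a<..<b}. f g \<le> f x"
proof -
  define c where "c = (a + b) / 2"
  have c: "a < c" "c < b" using \<open>a < b\<close> by (auto simp: c_def)
  have "eventually (\<lambda>x. f c \<le> f x) (at_right a)" "eventually (\<lambda>x. f c \<le> f x) (at_left b)"
    using assms(3,4) by (auto simp: filterlim_at_top)
  then obtain d e where "d > a" and left: "\<forall>x>a. x < d \<longrightarrow> f c \<le> f x"
    and "e < b" and right: "\<forall>x<b. x > e \<longrightarrow> f c \<le> f x"
    by (auto simp: eventually_at_right_field eventually_at_left_field)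
  define a' where "a' = min c ((a + d) / 2)"
  define b' where "b' = max c ((e + b) / 2)"
  have "a < a'" "b' < b" "a' \<le> c" "c \<le> b'"
    using c \<open>d > a\<close> \<open>e < b\<close> by (auto simp: a'_def b'_def)
  then have sub: "{a'..b'} \<subseteq> {a<..<b}" by auto
  have "f c \<le> f x" if "x \<in> {a<..<b} - {a'..b'}" for x
  proof -
    from that have "a < x \<and> x < a' \<or> b' < x \<and> x < b" by auto
    then show ?thesis using left right by (auto simp: a'_def b'_def)
  qed
  moreover have "continuous_on {a'..b'} f" using continuous_on_subset[OF assms(2) sub] .
  ultimately obtain g where "g \<in> {a'..b'}" "\<forall>x\<in>{a<..<b}. f g \<le> f x"
    using continuous_attains_inf_on_superset[of "{a'..b'}" "{a<..<b}" f c] sub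
      \<open>a' \<le> c\<close> \<open>c \<le> b'\<close> by auto
  with sub show ?thesis by blast
qed

lemma stability_margin_1_2_9:
  "2 * (1 + g) - 2 * ((1 + g)^2 + 2 / real (9::nat) * 1^2) = - (2/9) * (3*g + 1) * (3*g + 2)"
  by (simp add: power2_eq_square algebra_simps)

lemma stab_set_1_2_9: "stab_set 1 2 9 = {-2/3<..<-1/3}"
  unfolding stab_set_def stability_margin_1_2_9 by (auto simp: mult_less_0_iff zero_less_mult_iff)

lemma L_test_1_2_9: "L_test 1 u 2 9 g = u^2 * (9 * g^3 / (2 * (1 + g) * (3*g + 1) * (3*g + 2)))"
proof -
  have N: "2 - 2 * (1 + g) = - 2 * g" by simp
  show ?thesis
  proof (cases "g = -1 \<or> g = -1/3 \<or> g = -2/3")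
    case True
    then show ?thesis by (elim disjE) (simp_all add: L_test_def power2_eq_square)
  next
    case False
    then have "1 + g \<noteq> 0" "3*g + 1 \<noteq> 0" "3*g + 2 \<noteq> 0" by auto
    then show ?thesis
      unfolding L_test_def stability_margin_1_2_9 N
      by (simp add: divide_simps power2_eq_square power3_eq_cube)
  qed
qed

theorem corollary1:
  fixes u :: real
  assumes "u \<noteq> 0"
  shows "\<exists>a lam :: real. \<exists>S :: nat. a > 0 \<and> lam > 0 \<and> S \<ge> 1 \<and>
           stab_set a lam S \<noteq> {} \<and>
           (\<exists>g\<in>stab_set a lam S. \<forall>x\<in>stab_set a lam S. L_test a u lam S g \<le> L_test a u lam S x) \<and>
           (\<forall>g\<in>stab_set a lam S.
              (\<forall>x\<in>stab_set a lam S. L_test a u lam S g \<le> L_test a u lam S x) \<longrightarrow> g < 0)"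
proof -
  define r :: "real \<Rightarrow> real" where "r g = 9 * g^3 / (2 * (1 + g) * (3*g + 1) * (3*g + 2))" for g
  have loss: "L_test 1 u 2 9 = (\<lambda>g. u^2 * r g)"
    by (auto simp: L_test_1_2_9 r_def)
  have "u^2 > 0" using assms by simp
  have "filterlim r at_top (at_right (-2/3))" "filterlim r at_top (at_left (-1/3))"
    unfolding r_def by real_asymp+
  then have "filterlim (\<lambda>g. u^2 * r g) at_top (at_right (-2/3))"
    "filterlim (\<lambda>g. u^2 * r g) at_top (at_left (-1/3))"
    using \<open>u^2 > 0\<close> by (auto intro: filterlim_tendsto_pos_mult_at_top tendsto_const)
  moreover have "continuous_on {-2/3<..<-1/3} (\<lambda>g. u^2 * r g)"
    unfolding r_def by (intro continuous_intros) auto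
  ultimately have "\<exists>g\<in>{-2/3<..<-1/3::real}. \<forall>x\<in>{-2/3<..<-1/3}. u^2 * r g \<le> u^2 * r x"
    by (intro continuous_attains_inf_open_interval_coercive) auto
  then show ?thesis
    by (intro exI[of _ 1] exI[of _ 2] exI[of _ 9]) (auto simp: stab_set_1_2_9 loss)
qed

end
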